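(* Let $n$ be a positive integer and let $G$ be any graph with at most $n$ vertices. Then $\chi_{td}(G) \leq 3^{\lceil \log_2 n\rceil}$.
   Context: All graphs are simple. For a graph $G$ and a positive integer $k$, a proper $k$-total difference labeling of $G$ is a function $f: V(G)\to\{1,\dots,k\}$, extended to edges by $f(\{u,v\}) = |f(u)-f(v)|$, such that: (i) adjacent vertices receive different labels; (ii) two distinct edges sharing a vertex receive different labels; (iii) no edge receives the same label as either of its endpoints; and all edge labels lie in $\{1,\dots,k\}$. $\chi_{td}(G)$ denotes the smallest $k$ for which $G$ has a proper $k$-total difference labeling. *)

theory Defs
  imports Complex_Main
begin

definition simple_graph :: "'a set \<Rightarrow> ('a \<Rightarrow> 'a \<Rightarrow> bool) \<Rightarrow> bool" where
  "simple_graph V E \<longleftrightarrow> finite V \<and>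
     (\<forall>u v. E u v \<longrightarrow> u \<in> V \<and> v \<in> V) \<and>
     (\<forall>u v. E u v \<longrightarrow> E v u) \<and>
     (\<forall>u. \<not> E u u)"

definition proper_td_labeling ::
  "'a set \<Rightarrow> ('a \<Rightarrow> 'a \<Rightarrow> bool) \<Rightarrow> nat \<Rightarrow> ('a \<Rightarrow> int) \<Rightarrow> bool" where
  "proper_td_labeling V E k f \<longleftrightarrow>
     (\<forall>v\<in>V. 1 \<le> f v \<and> f v \<le> int k) \<and>
     (\<forall>u v. E u v \<longrightarrow> 1 \<le> \<bar>f u - f v\<bar> \<and> \<bar>f u - f v\<bar> \<le> int k) \<and>
     (\<forall>u v. E u v \<longrightarrow> f u \<noteq> f v) \<and>
     (\<forall>u v w. E u v \<and> E u w \<and> v \<noteq> w \<longrightarrow> \<bar>f u - f v\<bar> \<noteq> \<bar>f u - f w\<bar>) \<and>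
     (\<forall>u v. E u v \<longrightarrow> \<bar>f u - f v\<bar> \<noteq> f u \<and> \<bar>f u - f v\<bar> \<noteq> f v)"

definition chi_td :: "'a set \<Rightarrow> ('a \<Rightarrow> 'a \<Rightarrow> bool) \<Rightarrow> nat" where
  "chi_td V E = (LEAST k. 0 < k \<and> (\<exists>f. proper_td_labeling V E k f))"

end

theory Submission
  imports Defs "HOL-Library.Log_Nat"
begin

text \<open>Label the vertices injectively by numbers whose ternary digits are all 0 or 1, shifted
  into the upper half \<open>[c, 3^m]\<close> of the label range, where \<open>2c = 3^m + 1\<close>. Every edge label
  is then smaller than \<open>c\<close> and hence differs from the labels of its endpoints. Two edges at \<open>u\<close>
  with the same label \<open>|f u - f v| = |f u - f w|\<close> and \<open>f v \<noteq> f w\<close> would give \<open>f v + f w = 2 f u\<close>,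
  a three-term arithmetic progression, but numbers with ternary digits in \<open>{0,1}\<close> contain none:
  their sums never carry, so \<open>x + z = 2y\<close> forces equal digits. There are \<open>2^m\<close> such numbers
  below \<open>3^m\<close>, enough for \<open>n \<le> 2^m\<close> vertices when \<open>m = \<lceil>log\<^sub>2 n\<rceil>\<close>.\<close>

fun ternary_of_binary :: "nat \<Rightarrow> nat" where
  "ternary_of_binary x = (if x = 0 then 0 else x mod 2 + 3 * ternary_of_binary (x div 2))"

declare ternary_of_binary.simps [simp del]

lemma ternary_of_binary_0 [simp]: "ternary_of_binary 0 = 0"
  by (simp add: ternary_of_binary.simps)

lemma ternary_of_binary_rec: "ternary_of_binary x = x mod 2 + 3 * ternary_of_binary (x div 2)"
  by (cases "x = 0") (simp_all add: ternary_of_binary.simps[of x])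

lemma ternary_of_binary_less_pow:
  assumes "x < 2 ^ m"
  shows "2 * ternary_of_binary x < 3 ^ m"
  using assms
proof (induction m arbitrary: x)
  case (Suc m)
  then have "2 * ternary_of_binary (x div 2) < 3 ^ m"
    by auto
  then show ?case
    using ternary_of_binary_rec[of x] by simp
qed simp

lemma ternary_of_binary_progression_free:
  assumes "ternary_of_binary x + ternary_of_binary z = 2 * ternary_of_binary y"
  shows "x = z"
  using assms
proof (induction "x + z" arbitrary: x y z rule: less_induct)
  case less
  let ?t = ternary_of_binary
  have digits: "x mod 2 + z mod 2 + 3 * (?t (x div 2) + ?t (z div 2))
      = 2 * (y mod 2) + 3 * (2 * ?t (y div 2))"
    using less.prems ternary_of_binary_rec[of x] ternary_of_binary_rec[of y]
      ternary_of_binary_rec[of z] by simp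
  \<comment> \<open>modulo 3 the last digits satisfy \<open>a + c \<equiv> 2b\<close>, which for digits in \<open>{0,1}\<close> forces \<open>a = b = c\<close>\<close>
  then have last_digits: "x mod 2 = y mod 2" "z mod 2 = y mod 2"
    by presburger+
  with digits have "?t (x div 2) + ?t (z div 2) = 2 * ?t (y div 2)"
    by simp
  show "x = z"
  proof (cases "x + z = 0")
    case False
    then have "x div 2 + z div 2 < x + z"
      by linarith
    then have "x div 2 = z div 2"
      using less.hyps \<open>?t (x div 2) + ?t (z div 2) = 2 * ?t (y div 2)\<close> by blast
    with last_digits show ?thesis
      by (metis div_mult_mod_eq)
  qed simp
qed

lemma proper_td_labeling_of_progression_free:
  fixes f :: "'a \<Rightarrow> int"
  assumes graph: "simple_graph V E"
    and bounds: "\<And>v. v \<in> V \<Longrightarrow> c \<le> f v \<and> f v \<le> int k"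
    and upper_half: "int k < 2 * c"
    and progression_free: "\<And>u v w. \<lbrakk>u \<in> V; v \<in> V; w \<in> V; f v + f w = 2 * f u\<rbrakk> \<Longrightarrow> v = w"
  shows "proper_td_labeling V E k f"
proof -
  have endpoints: "u \<in> V" "v \<in> V" "u \<noteq> v" if "E u v" for u v
    using graph that unfolding simple_graph_def by blast+
  have injective: "f u \<noteq> f v" if "E u v" for u v
    using progression_free[of u u v] endpoints[OF that] by auto
  have small_edge_label: "\<bar>f u - f v\<bar> < f u" "\<bar>f u - f v\<bar> < f v" if "E u v" for u v
    using bounds[of u] bounds[of v] endpoints[OF that] upper_half by auto
  have distinct_edge_labels: "\<bar>f u - f v\<bar> \<noteq> \<bar>f u - f w\<bar>" if "E u v" "E u w" "v \<noteq> w" for u v w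
  proof
    assume "\<bar>f u - f v\<bar> = \<bar>f u - f w\<bar>"
    moreover have "f v \<noteq> f w"
      using progression_free[of v v w] endpoints that by auto
    ultimately have "f v + f w = 2 * f u"
      by linarith
    then show False
      using progression_free[of u v w] endpoints that by blast
  qed
  show ?thesis
    unfolding proper_td_labeling_def
  proof (intro conjI allI impI ballI)
    fix v assume "v \<in> V"
    then show "1 \<le> f v" "f v \<le> int k"
      using bounds[of v] upper_half by auto
  next
    fix u v assume "E u v"
    then show "1 \<le> \<bar>f u - f v\<bar>" "\<bar>f u - f v\<bar> \<le> int k" "f u \<noteq> f v"
        "\<bar>f u - f v\<bar> \<noteq> f u" "\<bar>f u - f v\<bar> \<noteq> f v"
      using injective small_edge_label bounds[of v] endpoints by fastforce+
  qed (use distinct_edge_labels in blast)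
qed

lemma exists_proper_td_labeling_3_pow:
  assumes graph: "simple_graph V E" and card: "card V \<le> 2 ^ m"
  shows "\<exists>f. proper_td_labeling V E (3 ^ m) f"
proof -
  have "finite V"
    using graph unfolding simple_graph_def by blast
  then obtain h :: "'a \<Rightarrow> nat" where h_range: "h ` V \<subseteq> {..<2 ^ m}" and "inj_on h V"
    using card_le_inj[of V "{..<(2::nat) ^ m}"] card by auto
  have "even ((3::int) ^ m + 1)"
    by simp
  then obtain c :: int where c_double: "3 ^ m + 1 = 2 * c"
    by (rule evenE)
  define f where "f v = c + int (ternary_of_binary (h v))" for v
  show ?thesis
  proof (intro exI proper_td_labeling_of_progression_free[OF graph])
    fix v assume "v \<in> V"
    then have "2 * ternary_of_binary (h v) < 3 ^ m"
      using h_range ternary_of_binary_less_pow by blast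
    then have "int (2 * ternary_of_binary (h v)) < int (3 ^ m)"
      by linarith
    then show "c \<le> f v \<and> f v \<le> int (3 ^ m)"
      unfolding f_def using c_double by simp
  next
    show "int (3 ^ m) < 2 * c"
      using c_double by simp
  next
    fix u v w assume "u \<in> V" "v \<in> V" "w \<in> V" "f v + f w = 2 * f u"
    then have "int (ternary_of_binary (h v) + ternary_of_binary (h w))
        = int (2 * ternary_of_binary (h u))"
      unfolding f_def by simp
    then have "ternary_of_binary (h v) + ternary_of_binary (h w) = 2 * ternary_of_binary (h u)"
      by (simp only: of_nat_eq_iff)
    then have "h v = h w"
      by (rule ternary_of_binary_progression_free)
    with \<open>inj_on h V\<close> \<open>v \<in> V\<close> \<open>w \<in> V\<close> show "v = w"
      by (simp add: inj_on_def)
  qed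
qed

lemma chi_td_le:
  assumes "proper_td_labeling V E k f" and "0 < k"
  shows "chi_td V E \<le> k"
  unfolding chi_td_def using assms by (blast intro: Least_le)

theorem mainTheorem1:
  fixes V :: "'a set" and E :: "'a \<Rightarrow> 'a \<Rightarrow> bool" and n :: nat
  assumes "0 < n" and "simple_graph V E" and "card V \<le> n"
  shows "chi_td V E \<le> 3 ^ nat \<lceil>log 2 (real n)\<rceil>"
proof -
  have exponent: "nat \<lceil>log 2 (real n)\<rceil> = ceillog2 n"
    using assms(1) by (simp add: ceillog2_def)
  have "card V \<le> 2 ^ ceillog2 n"
    using assms(3) le_two_power_ceillog2 order_trans by blast
  then obtain f where "proper_td_labeling V E (3 ^ ceillog2 n) f"
    using exists_proper_td_labeling_3_pow[OF assms(2)] by blast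
  then show ?thesis
    unfolding exponent by (rule chi_td_le) simp
qed

end
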